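(* Let $G$ be a connected finite simple undirected graph with $n$ vertices, let $S$ be a balanced separator of $G$ of minimum cardinality, and let $\pi$ be any vertex order of $G$. Then $G_\pi^*$ contains a clique $Q$ with at least $|S|$ vertices, and there are at least $n/3$ vertices $u$ of $G$ such that every vertex of $Q$ belongs to the search space $\mathrm{SS}(u)$ (so that $Q$, with all its arcs, is a subgraph of $\mathrm{SS}(u)$).
   Context: Let $G=(V,E)$ be a finite simple undirected graph with $n=|V|$ vertices. A vertex order is a bijection $\pi:\{1,\dots,n\}\to V$; the rank of $v$ is $\pi^{-1}(v)$. Contracting a vertex $v$ in a graph means deleting $v$ and its incident edges and adding an edge between every pair of former neighbors of $v$ that are not already adjacent. The core graph $G_{\pi,i}$ is obtained from $G$ by contracting $\pi(1),\dots,\pi(i-1)$ in this order. $G_\pi^*$ is the graph on $V$ whose edge set is the union of the edge sets of all $G_{\pi,i}$, $i=1,\dots,n$ (i.e. $G$ together with all edges inserted during the contractions). $G_\pi^\wedge$ is the directed graph obtained from $G_\pi^*$ by orienting every edge from its endpoint of lower rank to its endpoint of higher rank. The search space $\mathrm{SS}(v)$ is the subgraph of $G_\pi^\wedge$ induced by the set of vertices reachable from $v$ in $G_\pi^\wedge$ (including $v$). A balanced separator of a graph with vertex set $V$, $|V|=n$, is a set $S\subseteq V$ such that $V\setminus S$ can be partitioned into sets $A,B$ (possibly empty) with no edge between $A$ and $B$ and $|A|,|B|\le 2n/3$. *)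

theory Defs
  imports Main
begin

definition simple_graph :: "'a set \<Rightarrow> 'a set set \<Rightarrow> bool" where
  "simple_graph V E \<longleftrightarrow> finite V \<and>
     (\<forall>e\<in>E. \<exists>x y. e = {x, y} \<and> x \<noteq> y \<and> x \<in> V \<and> y \<in> V)"

definition adj_rel :: "'a set set \<Rightarrow> ('a \<times> 'a) set" where
  "adj_rel E = {(x, y). {x, y} \<in> E \<and> x \<noteq> y}"

definition connected_graph :: "'a set \<Rightarrow> 'a set set \<Rightarrow> bool" where
  "connected_graph V E \<longleftrightarrow> (\<forall>u\<in>V. \<forall>v\<in>V. (u, v) \<in> (adj_rel E)\<^sup>*)"

definition balanced_separator :: "'a set \<Rightarrow> 'a set set \<Rightarrow> 'a set \<Rightarrow> bool" where
  "balanced_separator V E S \<longleftrightarrow> S \<subseteq> V \<and>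
     (\<exists>A B. A \<union> B = V - S \<and> A \<inter> B = {} \<and>
        (\<forall>a\<in>A. \<forall>b\<in>B. {a, b} \<notin> E) \<and>
        3 * card A \<le> 2 * card V \<and> 3 * card B \<le> 2 * card V)"

definition min_balanced_separator :: "'a set \<Rightarrow> 'a set set \<Rightarrow> 'a set \<Rightarrow> bool" where
  "min_balanced_separator V E S \<longleftrightarrow> balanced_separator V E S \<and>
     (\<forall>S'. balanced_separator V E S' \<longrightarrow> card S \<le> card S')"

definition vertex_order :: "'a set \<Rightarrow> (nat \<Rightarrow> 'a) \<Rightarrow> bool" where
  "vertex_order V \<pi> \<longleftrightarrow> bij_betw \<pi> {1..card V} V"

definition rank :: "'a set \<Rightarrow> (nat \<Rightarrow> 'a) \<Rightarrow> 'a \<Rightarrow> nat" where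
  "rank V \<pi> v = inv_into {1..card V} \<pi> v"

definition contract :: "'a set \<times> 'a set set \<Rightarrow> 'a \<Rightarrow> 'a set \<times> 'a set set" where
  "contract G v = (fst G - {v},
     {e \<in> snd G. v \<notin> e} \<union>
     {{x, y} | x y. x \<noteq> y \<and> {v, x} \<in> snd G \<and> {v, y} \<in> snd G})"

primrec core_aux :: "'a set \<Rightarrow> 'a set set \<Rightarrow> (nat \<Rightarrow> 'a) \<Rightarrow> nat \<Rightarrow> 'a set \<times> 'a set set" where
  "core_aux V E \<pi> 0 = (V, E)"
| "core_aux V E \<pi> (Suc k) = contract (core_aux V E \<pi> k) (\<pi> (Suc k))"

definition core_graph :: "'a set \<Rightarrow> 'a set set \<Rightarrow> (nat \<Rightarrow> 'a) \<Rightarrow> nat \<Rightarrow> 'a set \<times> 'a set set" where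
  "core_graph V E \<pi> i = core_aux V E \<pi> (i - 1)"

definition star_edges :: "'a set \<Rightarrow> 'a set set \<Rightarrow> (nat \<Rightarrow> 'a) \<Rightarrow> 'a set set" where
  "star_edges V E \<pi> = (\<Union>i\<in>{1..card V}. snd (core_graph V E \<pi> i))"

definition up_arcs :: "'a set \<Rightarrow> 'a set set \<Rightarrow> (nat \<Rightarrow> 'a) \<Rightarrow> ('a \<times> 'a) set" where
  "up_arcs V E \<pi> = {(u, v). {u, v} \<in> star_edges V E \<pi> \<and> u \<noteq> v \<and> rank V \<pi> u < rank V \<pi> v}"

definition search_space :: "'a set \<Rightarrow> 'a set set \<Rightarrow> (nat \<Rightarrow> 'a) \<Rightarrow> 'a \<Rightarrow> 'a set" where
  "search_space V E \<pi> v = {w. (v, w) \<in> (up_arcs V E \<pi>)\<^sup>*}"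

definition is_clique :: "'a set \<Rightarrow> 'a set set \<Rightarrow> 'a set \<Rightarrow> bool" where
  "is_clique V E Q \<longleftrightarrow> Q \<subseteq> V \<and> (\<forall>x\<in>Q. \<forall>y\<in>Q. x \<noteq> y \<longrightarrow> {x, y} \<in> E)"

end

theory Submission
  imports Defs
begin

(* Let i be least such that some connected component of G[pi(1..i)] has at least n/3
   vertices; by minimality this component C contains p = pi(i).  Let Q consist of p and the
   neighbours of C outside pi(1..i).  Any two vertices of Q are joined by a path whose inner
   vertices lie in C and are contracted before both ends, so Q is a clique of G*; the same paths,
   followed in increasing rank, show that every vertex of C reaches all of Q upwards.  Removing Q
   leaves the components of G[pi(1..i-1)] inside C, each with fewer than n/3 vertices, and
   V - C - Q with at most 2n/3 vertices, with no edges between them; distributing these pieces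
   greedily over two sides yields a balanced separator, so |S| <= |Q|. *)

(* Once the vertices of T have been contracted, any two vertices outside T that are linked via T
   are adjacent. *)
inductive linked_via :: "'a set set \<Rightarrow> 'a set \<Rightarrow> 'a \<Rightarrow> 'a \<Rightarrow> bool" for E T where
  edge: "{x, y} \<in> E \<Longrightarrow> linked_via E T x y"
| step: "linked_via E T x z \<Longrightarrow> z \<in> T \<Longrightarrow> {z, y} \<in> E \<Longrightarrow> linked_via E T x y"

lemma linked_via_trans:
  assumes "linked_via E T x z" "z \<in> T" "linked_via E T z y"
  shows "linked_via E T x y"
  using assms(3,1,2) by (induction rule: linked_via.induct) (auto intro: linked_via.intros)

lemma linked_via_sym: "linked_via E T x y \<Longrightarrow> linked_via E T y x"
proof (induction rule: linked_via.induct)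
  case (edge x y)
  then show ?case by (simp add: insert_commute linked_via.edge)
next
  case (step x z y)
  have "linked_via E T y z" using step(3) by (simp add: insert_commute linked_via.edge)
  with step show ?case by (blast intro: linked_via_trans)
qed

lemma linked_via_mono: "linked_via E T x y \<Longrightarrow> T \<subseteq> T' \<Longrightarrow> linked_via E T' x y"
  by (induction rule: linked_via.induct) (auto intro: linked_via.intros)

lemma linked_via_insertE:
  "linked_via E (insert v T) x y \<Longrightarrow>
    linked_via E T x y \<or> ((x = v \<or> linked_via E T x v) \<and> linked_via E T v y)"
  by (induction rule: linked_via.induct) (auto intro: linked_via.intros)

lemma linked_via_emptyD: "linked_via E {} x y \<Longrightarrow> {x, y} \<in> E"
  by (cases rule: linked_via.cases) auto

definition component_in :: "'a set set \<Rightarrow> 'a set \<Rightarrow> 'a \<Rightarrow> 'a set" where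
  "component_in E T y = {z \<in> T. z = y \<or> linked_via E T y z}"

lemma self_in_component_in: "y \<in> T \<Longrightarrow> y \<in> component_in E T y"
  by (simp add: component_in_def)

lemma component_in_subset: "component_in E T y \<subseteq> T"
  by (auto simp: component_in_def)

lemma component_in_subset_component_in:
  assumes "T \<subseteq> T'" "x \<in> component_in E T' y"
  shows "component_in E T x \<subseteq> component_in E T' y"
  using assms by (auto simp: component_in_def intro: linked_via_trans linked_via_mono)

lemma component_in_eq:
  assumes "y \<in> T" "z \<in> component_in E T y"
  shows "component_in E T z = component_in E T y"
proof
  show "component_in E T z \<subseteq> component_in E T y"
    using assms(2) by (rule component_in_subset_component_in[OF order_refl])
  have "y \<in> component_in E T z"
    using assms by (auto simp: component_in_def intro: linked_via_sym)
  then show "component_in E T y \<subseteq> component_in E T z"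
    by (rule component_in_subset_component_in[OF order_refl])
qed

lemma component_in_edge_closed:
  assumes "x \<in> component_in E T y" "z \<in> T" "{x, z} \<in> E"
  shows "z \<in> component_in E T y"
  using assms by (auto simp: component_in_def intro: linked_via.intros)

lemma component_in_insert_subset:
  assumes "v \<notin> component_in E (insert v T) y"
  shows "component_in E (insert v T) y \<subseteq> component_in E T y"
proof
  fix z assume z: "z \<in> component_in E (insert v T) y"
  have "y \<noteq> v" using assms z by (auto simp: component_in_def)
  have "\<not> linked_via E T y v"
    using assms z by (auto simp: component_in_def dest: linked_via_mono[of _ _ _ _ "insert v T"])
  then show "z \<in> component_in E T y"
    using z assms \<open>y \<noteq> v\<close> by (auto simp: component_in_def dest: linked_via_insertE)
qed

lemma component_in_connected:
  assumes "simple_graph V E" "connected_graph V E" "y \<in> V"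
  shows "component_in E V y = V"
proof -
  have "z = y \<or> linked_via E V y z" if "(y, z) \<in> (adj_rel E)\<^sup>*" for z
    using that
  proof (induction rule: rtrancl_induct)
    case (step z z')
    then have "{z, z'} \<in> E" by (simp add: adj_rel_def)
    moreover have "z \<in> V"
      using \<open>{z, z'} \<in> E\<close> assms(1) by (auto simp: simple_graph_def doubleton_eq_iff)
    ultimately show ?case using step.IH by (auto intro: linked_via.intros)
  qed simp
  then show ?thesis
    using assms(2,3) by (auto simp: component_in_def connected_graph_def)
qed

lemma split_two_thirds:
  fixes w :: "'b \<Rightarrow> nat"
  assumes "finite F" "\<forall>K\<in>F. 3 * w K < n" "3 * r \<le> 2 * n" "r + sum w F \<le> n"
  shows "\<exists>G\<subseteq>F. 3 * (r + sum w G) \<le> 2 * n \<and> 3 * sum w (F - G) \<le> 2 * n"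
  using assms
proof (induction F rule: finite_induct)
  case (insert K F)
  then obtain G where G: "G \<subseteq> F" "3 * (r + sum w G) \<le> 2 * n" "3 * sum w (F - G) \<le> 2 * n"
    by auto
  have "finite G" using G(1) insert.hyps(1) by (rule finite_subset)
  have "K \<notin> G" using G(1) insert.hyps(2) by auto
  have sum_F: "sum w F = sum w (F - G) + sum w G"
    using G(1) insert.hyps(1) by (rule sum.subset_diff)
  have sum_rest: "sum w (insert K F - G) = w K + sum w (F - G)"
    using \<open>K \<notin> G\<close> insert.hyps by (simp add: insert_Diff_if)
  show ?case
  proof (cases "3 * (r + sum w G + w K) \<le> 2 * n")
    case True
    moreover have "insert K F - insert K G = F - G" using insert.hyps(2) by auto
    ultimately show ?thesis
      using G \<open>finite G\<close> \<open>K \<notin> G\<close> by (intro exI[of _ "insert K G"]) (auto simp: add.commute)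
  next
    case False
    have "3 * sum w (insert K F - G) \<le> 2 * n"
      using False insert.prems sum_F sum_rest insert.hyps by simp
    then show ?thesis using G by blast
  qed
qed simp

lemma balanced_separator_by_blocks:
  assumes "finite V" "Q \<subseteq> V" "V - Q = R \<union> \<Union>F" "disjnt R (\<Union>F)" "pairwise disjnt F"
    and "\<forall>K\<in>F. 3 * card K < card V" "3 * card R \<le> 2 * card V"
    and "\<forall>K\<in>F. \<forall>x\<in>K. \<forall>r\<in>R. {x, r} \<notin> E"
    and "\<forall>K\<in>F. \<forall>K'\<in>F. K \<noteq> K' \<longrightarrow> (\<forall>x\<in>K. \<forall>x'\<in>K'. {x, x'} \<notin> E)"
  shows "balanced_separator V E Q"
proof -
  have "\<Union>F \<subseteq> V" "R \<subseteq> V" using assms(3) by auto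
  then have "finite R" "finite (\<Union>F)"
    using assms(1) by (auto intro: finite_subset)
  then have fin: "finite R" "finite (\<Union>F)" "finite F" "\<forall>K\<in>F. finite K"
    by (auto intro: finite_UnionD rev_finite_subset)
  have card_blocks: "card (\<Union>G) = sum card G" if "G \<subseteq> F" for G
    using that assms(5) fin(4) by (intro card_Union_disjoint) (auto intro: pairwise_subset)
  have "card R + card (\<Union>F) \<le> card V"
    using assms(1,3,4) fin card_Un_disjoint[of R "\<Union>F"]
    by (metis Diff_subset card_mono disjnt_def)
  then obtain G where G: "G \<subseteq> F" "3 * (card R + sum card G) \<le> 2 * card V"
      "3 * sum card (F - G) \<le> 2 * card V"
    using split_two_thirds[OF fin(3) assms(6,7)] card_blocks[of F] by auto
  define A where "A = R \<union> \<Union>G"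
  define B where "B = \<Union>(F - G)"
  have disjoint_parts: "disjnt K K'" if "K \<in> G" "K' \<in> F - G" for K K'
    using that G(1) assms(5) by (metis DiffD1 DiffD2 pairwiseD subsetD)
  have "A \<union> B = V - Q" using G(1) assms(3) by (auto simp: A_def B_def)
  moreover have "A \<inter> B = {}"
    using assms(4) disjoint_parts G(1) by (fastforce simp: A_def B_def disjnt_def)
  moreover have "card A = card R + sum card G"
  proof -
    have "finite (\<Union>G)" "R \<inter> \<Union>G = {}"
      using G(1) fin(2) assms(4) by (auto simp: disjnt_def intro: rev_finite_subset)
    then show ?thesis
      using fin(1) G(1) card_blocks by (simp add: A_def card_Un_disjoint)
  qed
  moreover have "card B = sum card (F - G)"
    unfolding B_def by (rule card_blocks) blast
  moreover have "\<forall>a\<in>A. \<forall>b\<in>B. {a, b} \<notin> E"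
    using assms(8,9) G(1) by (fastforce simp: A_def B_def insert_commute)
  ultimately show ?thesis
    using assms(2) G unfolding balanced_separator_def by metis
qed

definition outer_neighbours :: "'a set \<Rightarrow> 'a set set \<Rightarrow> 'a set \<Rightarrow> 'a set \<Rightarrow> 'a set" where
  "outer_neighbours V E T C = {w \<in> V - T. \<exists>c\<in>C. {c, w} \<in> E}"

lemma linked_via_outer_neighbour:
  assumes "p \<in> T" "w \<in> outer_neighbours V E T (component_in E T p)"
  shows "linked_via E T p w"
  using assms by (auto simp: outer_neighbours_def component_in_def intro: linked_via.intros)

lemma pairwise_disjnt_components_in:
  assumes "X \<subseteq> T"
  shows "pairwise disjnt (component_in E T ` X)"
proof (rule pairwiseI)
  fix K K' assume K: "K \<in> component_in E T ` X" and K': "K' \<in> component_in E T ` X" and "K \<noteq> K'"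
  obtain y where "y \<in> T" "K = component_in E T y" using K assms by (auto elim!: imageE)
  obtain y' where "y' \<in> T" "K' = component_in E T y'" using K' assms by (auto elim!: imageE)
  show "disjnt K K'"
  proof (rule ccontr)
    assume "\<not> disjnt K K'"
    then obtain z where "z \<in> K" "z \<in> K'" by (auto simp: disjnt_def)
    have "component_in E T z = K"
      using \<open>z \<in> K\<close> unfolding \<open>K = _\<close> by (rule component_in_eq[OF \<open>y \<in> T\<close>])
    moreover have "component_in E T z = K'"
      using \<open>z \<in> K'\<close> unfolding \<open>K' = _\<close> by (rule component_in_eq[OF \<open>y' \<in> T\<close>])
    ultimately show False using \<open>K \<noteq> K'\<close> by simp
  qed
qed

lemma no_edge_between_components_in:
  assumes "X \<subseteq> T" "K \<in> component_in E T ` X" "K' \<in> component_in E T ` X" "K \<noteq> K'"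
    and "x \<in> K" "x' \<in> K'"
  shows "{x, x'} \<notin> E"
proof
  assume "{x, x'} \<in> E"
  obtain y where "K = component_in E T y" using assms(2) by blast
  moreover have "x' \<in> T"
    using assms(3,6) component_in_subset[of E T] by blast
  ultimately have "x' \<in> K" using component_in_edge_closed assms(5) \<open>{x, x'} \<in> E\<close> by metis
  then show False
    using pairwise_disjnt_components_in[OF assms(1)] assms(2-4,6)
    by (auto simp: pairwise_def disjnt_def)
qed

lemma balanced_separator_around_component:
  assumes "finite V" "insert p T \<subseteq> V" "p \<notin> T"
    and large: "card V \<le> 3 * card (component_in E (insert p T) p)"
    and small: "\<forall>x\<in>T. 3 * card (component_in E T x) < card V"
  defines "C \<equiv> component_in E (insert p T) p"
  shows "balanced_separator V E (insert p (outer_neighbours V E (insert p T) C))"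
proof -
  define N where "N = outer_neighbours V E (insert p T) C"
  define F where "F = component_in E T ` (C - {p})"
  have C: "C \<subseteq> insert p T" "p \<in> C" "C - {p} \<subseteq> T"
    using component_in_subset[of E "insert p T" p] self_in_component_in[of p "insert p T" E]
    unfolding C_def by auto
  have "K \<subseteq> C - {p}" if "K \<in> F" for K
  proof -
    obtain x where "x \<in> C" "K = component_in E T x" using \<open>K \<in> F\<close> by (auto simp: F_def)
    then have "K \<subseteq> C" "K \<subseteq> T"
      unfolding C_def
      by (simp_all add: component_in_subset_component_in[OF subset_insertI] component_in_subset)
    then show ?thesis using assms(3) by auto
  qed
  moreover have "C - {p} \<subseteq> \<Union>F"
    using C by (force simp: F_def intro: self_in_component_in)
  ultimately have blocks: "\<Union>F = C - {p}" by blast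
  show ?thesis
  proof (rule balanced_separator_by_blocks[where R = "V - C - N" and F = F])
    show "V - insert p (outer_neighbours V E (insert p T) C) = (V - C - N) \<union> \<Union>F"
      using blocks C assms(2) by (auto simp: N_def outer_neighbours_def)
    show "pairwise disjnt F"
      unfolding F_def using C(3) by (rule pairwise_disjnt_components_in)
    show "\<forall>K\<in>F. 3 * card K < card V"
      using small C by (auto simp: F_def)
    have "card (V - C - N) \<le> card V - card C"
      using assms(1,2) C
      by (metis Diff_subset card_Diff_subset card_mono finite_Diff order_trans rev_finite_subset)
    then show "3 * card (V - C - N) \<le> 2 * card V"
      using large[folded C_def] by linarith
    show "\<forall>K\<in>F. \<forall>K'\<in>F. K \<noteq> K' \<longrightarrow> (\<forall>x\<in>K. \<forall>x'\<in>K'. {x, x'} \<notin> E)"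
      unfolding F_def using no_edge_between_components_in[OF C(3)] by blast
    show "\<forall>K\<in>F. \<forall>x\<in>K. \<forall>r\<in>V - C - N. {x, r} \<notin> E"
    proof (intro ballI notI)
      fix K x r assume "K \<in> F" "x \<in> K" "r \<in> V - C - N" "{x, r} \<in> E"
      then have "x \<in> C" using blocks by auto
      have "r \<in> C" if "r \<in> insert p T"
        using component_in_edge_closed \<open>x \<in> C\<close> \<open>{x, r} \<in> E\<close> that unfolding C_def by metis
      moreover have "r \<in> N" if "r \<notin> insert p T"
        using \<open>x \<in> C\<close> \<open>{x, r} \<in> E\<close> \<open>r \<in> V - C - N\<close> that by (auto simp: N_def outer_neighbours_def)
      ultimately show False using \<open>r \<in> V - C - N\<close> by blast
    qed
  qed (use assms(1,2) C blocks in \<open>auto simp: N_def outer_neighbours_def disjnt_def\<close>)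
qed

lemma image_atLeastAtMost_Suc: "\<pi> ` {1..Suc k} = insert (\<pi> (Suc k)) (\<pi> ` {1..k})"
  by (auto simp: atLeastAtMostSuc_conv)

lemma core_aux_edge_if_linked_via:
  assumes "inj_on \<pi> {1..k}" "x \<noteq> y" "x \<notin> \<pi> ` {1..k}" "y \<notin> \<pi> ` {1..k}"
    and "linked_via E (\<pi> ` {1..k}) x y"
  shows "{x, y} \<in> snd (core_aux V E \<pi> k)"
  using assms
proof (induction k arbitrary: x y)
  case 0
  then show ?case by (simp add: linked_via_emptyD)
next
  case (Suc k)
  let ?v = "\<pi> (Suc k)" and ?T = "\<pi> ` {1..k}" and ?G = "snd (core_aux V E \<pi> k)"
  have inj: "inj_on \<pi> {1..k}" using Suc.prems(1) by (rule inj_on_subset) auto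
  have "?v \<notin> ?T" using Suc.prems(1) by (force simp: inj_on_def)
  have xy: "x \<notin> ?T" "y \<notin> ?T" "x \<noteq> ?v" "y \<noteq> ?v"
    using Suc.prems(3,4) by (auto simp: image_atLeastAtMost_Suc)
  consider "linked_via E ?T x y" | "linked_via E ?T x ?v" "linked_via E ?T ?v y"
    using linked_via_insertE[OF Suc.prems(5)[unfolded image_atLeastAtMost_Suc]] xy by blast
  then show ?case
  proof cases
    case 1
    then have "{x, y} \<in> ?G" using Suc.IH[OF inj Suc.prems(2)] xy by blast
    then show ?thesis using xy by (simp add: contract_def)
  next
    case 2
    then have "{?v, x} \<in> ?G" "{?v, y} \<in> ?G"
      using Suc.IH[OF inj] xy \<open>?v \<notin> ?T\<close> by (auto simp: insert_commute dest: linked_via_sym)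
    then show ?thesis using Suc.prems(2) by (auto simp: contract_def)
  qed
qed

context
  fixes V :: "'a set" and E :: "'a set set" and \<pi> :: "nat \<Rightarrow> 'a"
  assumes vertex_order: "vertex_order V \<pi>"
begin

lemma inj_on_order: "inj_on \<pi> {1..card V}"
  and image_order: "\<pi> ` {1..card V} = V"
  using vertex_order by (auto simp: vertex_order_def bij_betw_def)

lemma finite_order_vertices: "finite V"
  using image_order by (metis finite_atLeastAtMost finite_imageI)

lemma order_prefix_subset: "k \<le> card V \<Longrightarrow> \<pi> ` {1..k} \<subseteq> V"
  using image_order by auto

lemma rank_order: "k \<in> {1..card V} \<Longrightarrow> rank V \<pi> (\<pi> k) = k"
  using inj_on_order by (simp add: rank_def inv_into_f_f)

lemma rank_in_range: "w \<in> V \<Longrightarrow> rank V \<pi> w \<in> {1..card V}"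
  and order_rank: "w \<in> V \<Longrightarrow> \<pi> (rank V \<pi> w) = w"
proof -
  assume "w \<in> V"
  then have "w \<in> \<pi> ` {1..card V}" using image_order by simp
  then show "rank V \<pi> w \<in> {1..card V}" "\<pi> (rank V \<pi> w) = w"
    unfolding rank_def by (rule inv_into_into, rule f_inv_into_f)
qed

lemma rank_gt_if_notin_prefix:
  assumes "w \<in> V" "w \<notin> \<pi> ` {1..k}"
  shows "k < rank V \<pi> w"
  using rank_in_range[OF assms(1)] order_rank[OF assms(1)] assms(2)
  by (metis atLeastAtMost_iff image_eqI not_less)

lemma rank_le_if_in_prefix:
  assumes "k \<le> card V" "u \<in> \<pi> ` {1..k}"
  shows "rank V \<pi> u \<le> k"
  using assms rank_order by auto

lemma order_Suc_notin_prefix: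
  assumes "j < card V"
  shows "\<pi> (Suc j) \<in> V - \<pi> ` {1..j}"
proof -
  have "\<pi> (Suc j) \<in> V" using assms image_order by auto
  moreover have "\<pi> (Suc j) \<notin> \<pi> ` {1..j}"
    using assms rank_order[of "Suc j"] rank_le_if_in_prefix[of j "\<pi> (Suc j)"] by auto
  ultimately show ?thesis by simp
qed

lemma star_edge_if_linked_via:
  assumes "x \<noteq> y" "x \<notin> \<pi> ` {1..k}" "y \<in> V - \<pi> ` {1..k}"
    and "linked_via E (\<pi> ` {1..k}) x y"
  shows "{x, y} \<in> star_edges V E \<pi>"
proof -
  have "k < card V"
  proof (rule ccontr)
    assume "\<not> k < card V"
    then have "\<pi> ` {1..card V} \<subseteq> \<pi> ` {1..k}" by (intro image_mono) auto
    then have "V \<subseteq> \<pi> ` {1..k}" by (simp only: image_order)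
    then show False using assms(3) by blast
  qed
  then have "{x, y} \<in> snd (core_aux V E \<pi> k)"
    using assms inj_on_order by (intro core_aux_edge_if_linked_via) (auto intro: inj_on_subset)
  then show ?thesis
    using \<open>k < card V\<close> unfolding star_edges_def core_graph_def by (intro UN_I[of "Suc k"]) auto
qed

lemma up_arc_if_linked_via:
  assumes "u \<notin> \<pi> ` {1..k}" "w \<in> V - \<pi> ` {1..k}" "rank V \<pi> u < rank V \<pi> w"
    and "linked_via E (\<pi> ` {1..k}) u w"
  shows "(u, w) \<in> up_arcs V E \<pi>"
proof -
  have "u \<noteq> w" using assms(3) by auto
  then show ?thesis
    using assms star_edge_if_linked_via by (simp add: up_arcs_def)
qed

lemma up_reachable_if_linked_via:
  assumes "k \<le> card V" "w \<in> V - \<pi> ` {1..k}" "rank V \<pi> u < rank V \<pi> w"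
    and "linked_via E (\<pi> ` {1..k}) u w"
  shows "(u, w) \<in> (up_arcs V E \<pi>)\<^sup>*"
  using assms
proof (induction k arbitrary: u w)
  case 0
  then show ?case using up_arc_if_linked_via[of u 0 w] by auto
next
  case (Suc k)
  let ?v = "\<pi> (Suc k)" and ?T = "\<pi> ` {1..k}"
  show ?case
  proof (cases "u \<in> \<pi> ` {1..Suc k}")
    case False
    then show ?thesis using Suc.prems up_arc_if_linked_via by blast
  next
    case True
    have w: "w \<in> V - ?T" using Suc.prems(2) by (auto simp: image_atLeastAtMost_Suc)
    have v: "?v \<in> V - ?T" "rank V \<pi> ?v = Suc k"
      using Suc.prems(1) order_Suc_notin_prefix[of k] rank_order[of "Suc k"] by simp_all
    from linked_via_insertE[OF Suc.prems(4)[unfolded image_atLeastAtMost_Suc]]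
    consider "linked_via E ?T u w" | "u = ?v \<or> linked_via E ?T u ?v" "linked_via E ?T ?v w"
      by blast
    then show ?thesis
    proof cases
      case 1
      then show ?thesis using Suc w by simp
    next
      case 2
      have "(?v, w) \<in> up_arcs V E \<pi>"
        using up_arc_if_linked_via[OF _ w] v 2(2) rank_gt_if_notin_prefix Suc.prems(2) by auto
      moreover have "(u, ?v) \<in> (up_arcs V E \<pi>)\<^sup>*"
      proof (cases "u = ?v")
        case False
        then have "u \<in> ?T" using True[unfolded image_atLeastAtMost_Suc] by simp
        then have "rank V \<pi> u \<le> k"
          using Suc.prems(1) by (intro rank_le_if_in_prefix) simp_all
        then have "rank V \<pi> u < rank V \<pi> ?v" using v(2) by simp
        then show ?thesis using Suc.IH v(1) 2(1) False Suc.prems(1) by simp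
      qed simp
      ultimately show ?thesis by simp
    qed
  qed
qed

lemma first_large_component:
  assumes "simple_graph V E" "connected_graph V E" "V \<noteq> {}"
  obtains j where "j < card V"
    and "card V \<le> 3 * card (component_in E (insert (\<pi> (Suc j)) (\<pi> ` {1..j})) (\<pi> (Suc j)))"
    and "\<forall>x\<in>\<pi> ` {1..j}. 3 * card (component_in E (\<pi> ` {1..j}) x) < card V"
proof -
  define large where
    "large k \<longleftrightarrow> (\<exists>y\<in>\<pi> ` {1..k}. card V \<le> 3 * card (component_in E (\<pi> ` {1..k}) y))" for k
  have "large (card V)"
  proof -
    obtain y where "y \<in> V" using assms(3) by blast
    then have "card V \<le> 3 * card (component_in E V y)"
      using component_in_connected[OF assms(1,2)] by simp
    then show ?thesis unfolding large_def image_order using \<open>y \<in> V\<close> by blast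
  qed
  then obtain i where "large i" and least: "\<forall>k<i. \<not> large k"
    using exists_least_iff[of large] by blast
  then have "i \<le> card V" using \<open>large (card V)\<close> by (meson not_le)
  moreover have "i \<noteq> 0" using \<open>large i\<close> by (cases i) (auto simp: large_def)
  ultimately obtain j where j: "i = Suc j" "j < card V" by (cases i) auto
  let ?p = "\<pi> (Suc j)" and ?T = "\<pi> ` {1..j}"
  obtain y where y: "y \<in> insert ?p ?T"
    and large_y: "card V \<le> 3 * card (component_in E (insert ?p ?T) y)"
    using \<open>large i\<close>[unfolded large_def j(1) image_atLeastAtMost_Suc] by blast
  have "\<not> large j" using least j(1) by simp
  have "?p \<in> component_in E (insert ?p ?T) y"
  proof (rule ccontr)
    assume "?p \<notin> component_in E (insert ?p ?T) y"
    then have sub: "component_in E (insert ?p ?T) y \<subseteq> component_in E ?T y"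
      by (rule component_in_insert_subset)
    then have "y \<in> ?T"
      using self_in_component_in[OF y] component_in_subset[of E ?T y] by blast
    moreover have "card (component_in E (insert ?p ?T) y) \<le> card (component_in E ?T y)"
      by (rule card_mono[OF finite_subset[OF component_in_subset] sub]) simp
    ultimately have "large j"
      unfolding large_def using large_y by (intro bexI[of _ y]) simp_all
    then show False using \<open>\<not> large j\<close> by contradiction
  qed
  then have "component_in E (insert ?p ?T) ?p = component_in E (insert ?p ?T) y"
    using y by (rule component_in_eq[rotated])
  moreover have "\<forall>x\<in>?T. 3 * card (component_in E ?T x) < card V"
    using \<open>\<not> large j\<close> unfolding large_def by (simp add: not_le)
  ultimately show ?thesis
    using that[OF j(2)] large_y by simp
qed

lemma clique_around_component:
  assumes "j < card V"
  defines "p \<equiv> \<pi> (Suc j)"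
  defines "T \<equiv> insert p (\<pi> ` {1..j})"
  shows "is_clique V (star_edges V E \<pi>) (insert p (outer_neighbours V E T (component_in E T p)))"
proof -
  let ?N = "outer_neighbours V E T (component_in E T p)" and ?T' = "\<pi> ` {1..j}"
  have T: "T = insert p ?T'" by (simp add: T_def)
  have T_Suc: "T = \<pi> ` {1..Suc j}" unfolding T_def p_def by (rule image_atLeastAtMost_Suc[symmetric])
  have p: "p \<in> V - ?T'" unfolding p_def using assms(1) by (rule order_Suc_notin_prefix)
  have N: "?N \<subseteq> V - T" by (auto simp: outer_neighbours_def)
  have linked: "linked_via E T p w" if "w \<in> ?N" for w
    using that T by (intro linked_via_outer_neighbour) simp_all
  have p_edge: "{p, w} \<in> star_edges V E \<pi>" if "w \<in> ?N" for w
  proof -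
    have "linked_via E ?T' p w"
      using linked_via_insertE[OF linked[OF that, unfolded T]] by blast
    then show ?thesis
      using star_edge_if_linked_via[of p w j] p N that T by auto
  qed
  have N_edge: "{w, w'} \<in> star_edges V E \<pi>" if "w \<in> ?N" "w' \<in> ?N" "w \<noteq> w'" for w w'
  proof -
    have "linked_via E T w w'"
      using linked_via_trans[OF linked_via_sym[OF linked[OF that(1)]] _ linked[OF that(2)]] T by simp
    then show ?thesis
      using star_edge_if_linked_via[of w w' "Suc j"] N that unfolding T_Suc by auto
  qed
  have "insert p ?N \<subseteq> V" using p N by auto
  moreover have "{x, y} \<in> star_edges V E \<pi>" if "x \<in> insert p ?N" "y \<in> insert p ?N" "x \<noteq> y" for x y
    using that p_edge[of x] p_edge[of y] N_edge[of x y] by (metis insertE insert_commute)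
  ultimately show ?thesis by (simp add: is_clique_def)
qed

lemma component_in_search_spaces:
  assumes "j < card V"
  defines "p \<equiv> \<pi> (Suc j)"
  defines "T \<equiv> insert p (\<pi> ` {1..j})"
  shows "component_in E T p \<subseteq>
    {u \<in> V. insert p (outer_neighbours V E T (component_in E T p)) \<subseteq> search_space V E \<pi> u}"
proof (rule subsetI, intro CollectI conjI)
  let ?N = "outer_neighbours V E T (component_in E T p)" and ?T' = "\<pi> ` {1..j}"
  fix u assume u: "u \<in> component_in E T p"
  have T: "T = insert p ?T'" by (simp add: T_def)
  have T_Suc: "T = \<pi> ` {1..Suc j}" unfolding T_def p_def by (rule image_atLeastAtMost_Suc[symmetric])
  have p: "p \<in> V - ?T'" "rank V \<pi> p = Suc j"
    unfolding p_def using assms(1) order_Suc_notin_prefix rank_order by simp_all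
  have "u \<in> T" using u component_in_subset[of E T p] by blast
  then show "u \<in> V" using order_prefix_subset[of "Suc j"] assms(1) T_Suc by auto
  have rank_u: "rank V \<pi> u \<le> Suc j"
    using \<open>u \<in> T\<close> assms(1) rank_le_if_in_prefix unfolding T_Suc by simp
  have linked_u: "u = p \<or> linked_via E T u p"
    using u by (auto simp: component_in_def intro: linked_via_sym)
  have "(u, p) \<in> (up_arcs V E \<pi>)\<^sup>*"
  proof (cases "u = p")
    case False
    then have "linked_via E ?T' u p"
      using linked_via_insertE[of E p ?T' u p] linked_u T by auto
    moreover have "rank V \<pi> u \<le> j"
      using \<open>u \<in> T\<close> False T assms(1) rank_le_if_in_prefix[of j u] by simp
    ultimately show ?thesis
      using up_reachable_if_linked_via[of j p u] assms(1) p by simp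
  qed simp
  moreover have "(u, w) \<in> (up_arcs V E \<pi>)\<^sup>*" if "w \<in> ?N" for w
  proof -
    have "linked_via E T p w"
      using that T by (intro linked_via_outer_neighbour) simp_all
    then have "linked_via E T u w"
      using linked_u linked_via_trans[of E T u p w] T by auto
    moreover have "w \<in> V - T" using that by (simp add: outer_neighbours_def)
    moreover have "Suc j < rank V \<pi> w"
      using \<open>w \<in> V - T\<close> rank_gt_if_notin_prefix unfolding T_Suc by blast
    ultimately show ?thesis
      using up_reachable_if_linked_via[of "Suc j" w u] assms(1) rank_u unfolding T_Suc by simp
  qed
  ultimately show "insert p ?N \<subseteq> search_space V E \<pi> u" by (auto simp: search_space_def)
qed

end

theorem mainTheorem2:
  fixes V :: "'a set" and E :: "'a set set" and S :: "'a set" and \<pi> :: "nat \<Rightarrow> 'a"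
  assumes "simple_graph V E"
    and "connected_graph V E"
    and "min_balanced_separator V E S"
    and "vertex_order V \<pi>"
  shows "\<exists>Q. is_clique V (star_edges V E \<pi>) Q \<and> card S \<le> card Q \<and>
           3 * card {u \<in> V. Q \<subseteq> search_space V E \<pi> u} \<ge> card V"
proof (cases "V = {}")
  case True
  then have "S = {}"
    using assms(3) by (auto simp: min_balanced_separator_def balanced_separator_def)
  then show ?thesis by (intro exI[of _ "{}"]) (simp add: is_clique_def)
next
  case False
  obtain j where j: "j < card V"
    and large: "card V \<le> 3 * card (component_in E (insert (\<pi> (Suc j)) (\<pi> ` {1..j})) (\<pi> (Suc j)))"
    and small: "\<forall>x\<in>\<pi> ` {1..j}. 3 * card (component_in E (\<pi> ` {1..j}) x) < card V"
    using first_large_component[OF assms(4,1,2) False] .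
  define p where "p = \<pi> (Suc j)"
  define T where "T = \<pi> ` {1..j}"
  define Q where "Q = insert p (outer_neighbours V E (insert p T) (component_in E (insert p T) p))"
  have "is_clique V (star_edges V E \<pi>) Q"
    using clique_around_component[OF assms(4) j] by (simp add: Q_def p_def T_def)
  moreover have "card (component_in E (insert p T) p) \<le> card {u \<in> V. Q \<subseteq> search_space V E \<pi> u}"
    unfolding Q_def p_def T_def using finite_order_vertices[OF assms(4)]
    by (intro card_mono component_in_search_spaces[OF assms(4) j]) simp
  then have "card V \<le> 3 * card {u \<in> V. Q \<subseteq> search_space V E \<pi> u}"
    using large by (simp add: p_def T_def)
  moreover have "balanced_separator V E Q"
    using balanced_separator_around_component[of V p T E] finite_order_vertices[OF assms(4)]
      order_Suc_notin_prefix[OF assms(4) j] order_prefix_subset[OF assms(4), of j] j large small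
    by (simp add: Q_def p_def T_def)
  then have "card S \<le> card Q" using assms(3) by (simp add: min_balanced_separator_def)
  ultimately show ?thesis by blast
qed

end
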